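(* Let $\mathrm T=(T,\mathrm D)$ be a random labeled plane tree and let $\mathrm T^{\mathrm{sym}}$ be its symmetrization. Then for any constants $k,K,M$, \begin{align*} &\mathbb P\Big(\sup_{|i-j|\le k}|\ell_{\mathrm T}(\theta_T(i))-\ell_{\mathrm T}(\theta_T(j))|>M\Big)\\ &\le\mathbb P\Big(\sup_{|i-j|\le k}\mathrm{dist}(\theta_T(i),\theta_T(j))>K\Big)+\mathbb P\Big(\sup_{v,w\in V(\mathrm T^{\mathrm{sym}}):\,\mathrm{dist}(v,w)\le K}|\ell_{\mathrm T^{\mathrm{sym}}}(v)-\ell_{\mathrm T^{\mathrm{sym}}}(w)|>M\Big), \end{align*} where $i,j$ range over $\{0,\dots,2|T|-2\}$.
   Context: Plane trees are rooted and encoded by Ulam–Harris words (possibly with vertex types). A labeled plane tree $(t,\mathrm d)$ has real displacements on edges; $\ell_{\mathrm t}(v)$ is the sum of displacements on the path from the root to $v$, and $\mathrm{dist}$ is the graph distance in the tree. The contour exploration $\theta_t:\{0,\dots,2|t|-2\}\to V(t)$ is defined by $\theta_t(0)=\emptyset$ and $\theta_t(i)$ equal to the lexicographically first child of $\theta_t(i-1)$ not among $\theta_t(0),\dots,\theta_t(i-1)$, or the parent of $\theta_t(i-1)$ if there is no such child. For $\sigma=(\sigma_v,v\in V(t))$ with $\sigma_v$ a permutation of the children of $v$, $\sigma(t,\mathrm d)$ reorders the children of each $v$ according to $\sigma_v$ with displacements following their edges; the symmetrization of a random labeled tree $(T,\mathrm D)$ is $\sigma(T,\mathrm D)$ with $\sigma$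 chosen uniformly among all such vectors, conditionally on $(T,\mathrm D)$. *)

theory Defs
  imports "HOL-Probability.Probability" "HOL-Combinatorics.Permutations"
begin

text \<open>Words are lists of natural numbers (children indexed from 0).
  A plane tree is a finite, nonempty, prefix-closed set of words such that
  if u@[j] is a vertex then so is u@[i] for every i \<le> j.\<close>

definition plane_tree :: "nat list set \<Rightarrow> bool" where
  "plane_tree t \<longleftrightarrow> finite t \<and> [] \<in> t
     \<and> (\<forall>u v. u @ v \<in> t \<longrightarrow> u \<in> t)
     \<and> (\<forall>u i j. u @ [j] \<in> t \<and> i \<le> j \<longrightarrow> u @ [i] \<in> t)"

definition nkids :: "nat list set \<Rightarrow> nat list \<Rightarrow> nat" where
  "nkids t u = card {i. u @ [i] \<in> t}"

text \<open>A displacement function d assigns to every non-root vertex v the displacement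
  on the edge from its parent to v.  The label of v is the sum of the displacements
  along the path from the root to v.\<close>

definition label :: "nat list set \<Rightarrow> (nat list \<Rightarrow> real) \<Rightarrow> nat list \<Rightarrow> real" where
  "label t d v = (\<Sum>k\<in>{1..length v}. d (take k v))"

definition tree_adj :: "nat list \<Rightarrow> nat list \<Rightarrow> bool" where
  "tree_adj v w \<longleftrightarrow> (\<exists>i. w = v @ [i]) \<or> (\<exists>i. v = w @ [i])"

definition tree_path :: "nat list set \<Rightarrow> nat list list \<Rightarrow> bool" where
  "tree_path t p \<longleftrightarrow> p \<noteq> [] \<and> set p \<subseteq> t
     \<and> (\<forall>k. Suc k < length p \<longrightarrow> tree_adj (p ! k) (p ! Suc k))"

definition tree_dist :: "nat list set \<Rightarrow> nat list \<Rightarrow> nat list \<Rightarrow> nat" where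
  "tree_dist t v w = (LEAST n. \<exists>p. tree_path t p \<and> hd p = v \<and> last p = w \<and> length p = Suc n)"

text \<open>visited t i = [theta(0), ..., theta(i)].\<close>

primrec visited :: "nat list set \<Rightarrow> nat \<Rightarrow> nat list list" where
  "visited t 0 = [[]]"
| "visited t (Suc i) =
     (let vs = visited t i; v = last vs;
          C = {j. v @ [j] \<in> t \<and> v @ [j] \<notin> set vs}
      in vs @ [if C = {} then butlast v else v @ [Min C]])"

definition contour :: "nat list set \<Rightarrow> nat \<Rightarrow> nat list" where
  "contour t i = last (visited t i)"

text \<open>Vectors of permutations: sigma v permutes the children indices of v (and is the
  identity for v outside the tree, so the set is finite).\<close>

definition sym_vecs :: "nat list set \<Rightarrow> (nat list \<Rightarrow> nat \<Rightarrow> nat) set" where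
  "sym_vecs t = {\<sigma>. (\<forall>v\<in>t. \<sigma> v permutes {..<nkids t v}) \<and> (\<forall>v. v \<notin> t \<longrightarrow> \<sigma> v = id)}"

text \<open>The vertex map induced by sigma: the child v@[i] is sent to child number sigma v i.\<close>

definition sym_map :: "(nat list \<Rightarrow> nat \<Rightarrow> nat) \<Rightarrow> nat list \<Rightarrow> nat list" where
  "sym_map \<sigma> w = map (\<lambda>k. \<sigma> (take k w) (w ! k)) [0..<length w]"

definition sym_tree :: "(nat list \<Rightarrow> nat \<Rightarrow> nat) \<Rightarrow> nat list set \<Rightarrow> nat list set" where
  "sym_tree \<sigma> t = sym_map \<sigma> ` t"

text \<open>Displacements follow their edges.\<close>

definition sym_disp :: "(nat list \<Rightarrow> nat \<Rightarrow> nat) \<Rightarrow> nat list set \<Rightarrow> (nat list \<Rightarrow> real)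
    \<Rightarrow> nat list \<Rightarrow> real" where
  "sym_disp \<sigma> t d w' =
     (if \<exists>w\<in>t. sym_map \<sigma> w = w' then d (THE w. w \<in> t \<and> sym_map \<sigma> w = w') else 0)"

text \<open>Probability, conditionally on the labeled tree (t,d), that the symmetrization
  sigma(t,d), sigma uniform in sym_vecs t, satisfies P.\<close>

definition sym_cond_prob ::
    "(nat list set \<Rightarrow> (nat list \<Rightarrow> real) \<Rightarrow> bool) \<Rightarrow> nat list set \<Rightarrow> (nat list \<Rightarrow> real) \<Rightarrow> real" where
  "sym_cond_prob P t d =
     real (card {\<sigma>\<in>sym_vecs t. P (sym_tree \<sigma> t) (sym_disp \<sigma> t d)}) / real (card (sym_vecs t))"

end

theory Submission
  imports Defs
begin

text \<open>A symmetrization \<sigma>(t,d) is an isomorphism of labeled trees: its vertex map is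
  injective, preserves adjacency (hence graph distances) and carries each displacement
  along its edge (hence preserves labels).  So the event that two vertices
  at distance at most K have labels differing by more than M has the same truth value for
  (t,d) and for every \<sigma>(t,d), and its conditional probability under symmetrization is just
  its indicator.  The theorem is then a union bound: if two contour times i, j with
  |i - j| \<le> k have labels differing by more than M, either their vertices are at distance
  greater than K, or they witness the event above.\<close>

lemma plane_tree_finite_children:
  assumes "plane_tree t"
  shows "finite {j. v @ [j] \<in> t}"
proof -
  have "finite ((\<lambda>j. v @ [j]) -` t)"
    using assms by (intro finite_vimageI) (auto simp: plane_tree_def inj_def)
  then show ?thesis
    by (simp add: vimage_def)
qed

lemma visited_nonempty: "visited t i \<noteq> []"
  by (induction i) (auto simp: Let_def)

lemma set_visited_subset:
  assumes "plane_tree t"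
  shows "set (visited t i) \<subseteq> t"
proof (induction i)
  case 0
  then show ?case using assms by (simp add: plane_tree_def)
next
  case (Suc i)
  define v where "v = last (visited t i)"
  define C where "C = {j. v @ [j] \<in> t \<and> v @ [j] \<notin> set (visited t i)}"
  have "v \<in> t"
    using Suc visited_nonempty[of t i] unfolding v_def by auto
  have "finite C"
    using plane_tree_finite_children[OF assms, of v] unfolding C_def
    by (rule finite_subset[rotated]) auto
  have "(if C = {} then butlast v else v @ [Min C]) \<in> t"
  proof (cases "C = {}")
    case True
    then show ?thesis
      using \<open>v \<in> t\<close> assms unfolding plane_tree_def
      by (metis append_butlast_last_id butlast.simps(1))
  next
    case False
    with \<open>finite C\<close> have "Min C \<in> C"
      by simp
    then have "v @ [Min C] \<in> t"
      unfolding C_def by blast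
    with False show ?thesis
      by simp
  qed
  then show ?case
    using Suc unfolding v_def C_def by (simp add: Let_def)
qed

lemma contour_in_tree: "plane_tree t \<Longrightarrow> contour t i \<in> t"
  unfolding contour_def using set_visited_subset last_in_set[OF visited_nonempty] by blast

lemma contour_far_or_close_far_labels:
  assumes "plane_tree t"
    and "\<bar>label t d (contour t i) - label t d (contour t j)\<bar> > M"
  shows "real (tree_dist t (contour t i) (contour t j)) > K
    \<or> (\<exists>v\<in>t. \<exists>w\<in>t. real (tree_dist t v w) \<le> K \<and> \<bar>label t d v - label t d w\<bar> > M)"
proof -
  have "contour t i \<in> t" "contour t j \<in> t"
    using contour_in_tree[OF assms(1)] by auto
  show ?thesis
  proof (cases "real (tree_dist t (contour t i) (contour t j)) > K")
    case False
    then have "real (tree_dist t (contour t i) (contour t j)) \<le> K"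
      by simp
    with assms(2) \<open>contour t i \<in> t\<close> \<open>contour t j \<in> t\<close> show ?thesis
      by blast
  qed simp
qed

lemma tree_dist_inj_image:
  assumes inj: "inj f" and adj: "\<And>a b. tree_adj (f a) (f b) \<longleftrightarrow> tree_adj a b"
  shows "tree_dist (f ` t) (f v) (f w) = tree_dist t v w"
proof -
  have path_image: "tree_path (f ` t) (map f p) \<longleftrightarrow> tree_path t p" for p
    using adj inj by (auto simp: tree_path_def inj_image_subset_iff)
  have "(\<exists>p. tree_path (f ` t) p \<and> hd p = f v \<and> last p = f w \<and> length p = Suc n)
      \<longleftrightarrow> (\<exists>p. tree_path t p \<and> hd p = v \<and> last p = w \<and> length p = Suc n)" for n
  proof
    assume "\<exists>p. tree_path (f ` t) p \<and> hd p = f v \<and> last p = f w \<and> length p = Suc n"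
    then obtain p where p: "tree_path (f ` t) p" "hd p = f v" "last p = f w" "length p = Suc n"
      by blast
    have "set p \<subseteq> range f"
      using p(1) by (auto simp: tree_path_def)
    then obtain q where q: "p = map f q"
      by (metis ex_map_conv rangeE subsetD)
    have "q \<noteq> []"
      using p(4) q by auto
    then have "tree_path t q" "hd q = v" "last q = w"
      using p path_image[of q] inj unfolding q by (auto simp: hd_map last_map dest: injD)
    then show "\<exists>q. tree_path t q \<and> hd q = v \<and> last q = w \<and> length q = Suc n"
      using p(4) q by auto
  next
    assume "\<exists>p. tree_path t p \<and> hd p = v \<and> last p = w \<and> length p = Suc n"
    then obtain p where p: "tree_path t p" "hd p = v" "last p = w" "length p = Suc n"
      by blast
    then have "tree_path (f ` t) (map f p)" "p \<noteq> []"
      using path_image by auto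
    then show "\<exists>q. tree_path (f ` t) q \<and> hd q = f v \<and> last q = f w \<and> length q = Suc n"
      using p by (intro exI[of _ "map f p"]) (simp add: hd_map last_map)
  qed
  then show ?thesis
    unfolding tree_dist_def by simp
qed

lemma close_far_labels_image_iff:
  assumes "\<And>v w. v \<in> t \<Longrightarrow> w \<in> t \<Longrightarrow> tree_dist (f ` t) (f v) (f w) = tree_dist t v w"
    and "\<And>v. v \<in> t \<Longrightarrow> label (f ` t) d' (f v) = label t d v"
  shows "(\<exists>v\<in>f ` t. \<exists>w\<in>f ` t. real (tree_dist (f ` t) v w) \<le> K \<and> \<bar>label (f ` t) d' v - label (f ` t) d' w\<bar> > M)
     \<longleftrightarrow> (\<exists>v\<in>t. \<exists>w\<in>t. real (tree_dist t v w) \<le> K \<and> \<bar>label t d v - label t d w\<bar> > M)"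
  using assms by (simp cong: bex_cong)

lemma length_sym_map [simp]: "length (sym_map \<sigma> w) = length w"
  by (simp add: sym_map_def)

lemma sym_map_Nil [simp]: "sym_map \<sigma> [] = []"
  by (simp add: sym_map_def)

lemma sym_map_snoc: "sym_map \<sigma> (w @ [i]) = sym_map \<sigma> w @ [\<sigma> w i]"
  unfolding sym_map_def by (auto simp: nth_append intro!: nth_equalityI)

lemma take_sym_map: "take k (sym_map \<sigma> w) = sym_map \<sigma> (take k w)"
  unfolding sym_map_def by (auto simp: min_def intro!: nth_equalityI)

lemma sym_map_eq_snocD:
  assumes "sym_map \<sigma> w = u' @ [j]"
  obtains u i where "w = u @ [i]" "sym_map \<sigma> u = u'" "\<sigma> u i = j"
proof -
  have "length w = Suc (length u')"
    using arg_cong[OF assms, of length] by simp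
  then obtain u i where w: "w = u @ [i]"
    by (metis length_Suc_conv_rev)
  with assms have "sym_map \<sigma> u = u'" "\<sigma> u i = j"
    by (simp_all add: sym_map_snoc)
  with w show ?thesis
    by (rule that)
qed

lemma inj_sym_map:
  assumes "\<And>v. inj (\<sigma> v)"
  shows "inj (sym_map \<sigma>)"
proof -
  have "sym_map \<sigma> w = sym_map \<sigma> w' \<Longrightarrow> w = w'" for w w'
  proof (induction w arbitrary: w' rule: rev_induct)
    case Nil
    then show ?case by (metis length_0_conv length_sym_map)
  next
    case (snoc i u)
    then have "sym_map \<sigma> w' = sym_map \<sigma> u @ [\<sigma> u i]"
      by (simp add: sym_map_snoc)
    then obtain u' i' where w': "w' = u' @ [i']" and "sym_map \<sigma> u' = sym_map \<sigma> u" "\<sigma> u' i' = \<sigma> u i"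
      by (rule sym_map_eq_snocD)
    moreover from this(2) have "u = u'"
      using snoc.IH by simp
    ultimately show ?case
      using assms by (auto dest: injD)
  qed
  then show ?thesis by (rule injI)
qed

lemma tree_adj_sym_map_iff:
  assumes "\<And>v. inj (\<sigma> v)"
  shows "tree_adj (sym_map \<sigma> a) (sym_map \<sigma> b) \<longleftrightarrow> tree_adj a b"
proof -
  have inj: "inj (sym_map \<sigma>)"
    using assms by (rule inj_sym_map)
  have child: "\<exists>i. w = u @ [i]" if eq: "sym_map \<sigma> w = sym_map \<sigma> u @ [j]" for w u j
  proof -
    obtain u' i where "w = u' @ [i]" "sym_map \<sigma> u' = sym_map \<sigma> u" "\<sigma> u' i = j"
      using eq by (rule sym_map_eq_snocD)
    with inj show ?thesis
      by (auto dest: injD)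
  qed
  show ?thesis
    unfolding tree_adj_def by (auto simp: sym_map_snoc dest: child)
qed

lemma label_sym_disp:
  assumes "inj (sym_map \<sigma>)" and "plane_tree t" and "v \<in> t"
  shows "label t' (sym_disp \<sigma> t d) (sym_map \<sigma> v) = label t d v"
  unfolding label_def
proof (rule sum.cong)
  fix k
  have "take k v \<in> t"
    using assms(2,3) unfolding plane_tree_def by (metis append_take_drop_id)
  moreover have "(THE w. w \<in> t \<and> sym_map \<sigma> w = sym_map \<sigma> (take k v)) = take k v"
    using assms(1) calculation by (auto dest: injD)
  ultimately show "sym_disp \<sigma> t d (take k (sym_map \<sigma> v)) = d (take k v)"
    unfolding sym_disp_def take_sym_map by auto
qed simp

lemma sym_vecs_inj: "\<sigma> \<in> sym_vecs t \<Longrightarrow> inj (\<sigma> v)"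
  unfolding sym_vecs_def by (cases "v \<in> t") (auto dest: permutes_inj)

lemma id_in_sym_vecs: "(\<lambda>v. id) \<in> sym_vecs t"
  unfolding sym_vecs_def by (auto intro: permutes_id)

lemma finite_sym_vecs:
  assumes "finite t"
  shows "finite (sym_vecs t)"
proof -
  let ?extend = "\<lambda>\<tau> v. if v \<in> t then \<tau> v else id"
  have "sym_vecs t \<subseteq> ?extend ` PiE t (\<lambda>v. {p. p permutes {..<nkids t v}})"
  proof
    fix \<sigma> assume "\<sigma> \<in> sym_vecs t"
    then have "\<sigma> = ?extend (restrict \<sigma> t)" "restrict \<sigma> t \<in> PiE t (\<lambda>v. {p. p permutes {..<nkids t v}})"
      unfolding sym_vecs_def by auto
    then show "\<sigma> \<in> ?extend ` PiE t (\<lambda>v. {p. p permutes {..<nkids t v}})"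
      by blast
  qed
  moreover have "finite (PiE t (\<lambda>v. {p. p permutes {..<nkids t v}}))"
    using assms by (intro finite_PiE) (auto intro: finite_permutations)
  ultimately show ?thesis
    by (rule finite_subset[OF _ finite_imageI])
qed

lemma sym_cond_prob_invariant:
  assumes "finite t"
    and invariant: "\<And>\<sigma>. \<sigma> \<in> sym_vecs t \<Longrightarrow> P (sym_tree \<sigma> t) (sym_disp \<sigma> t d) \<longleftrightarrow> P t d"
  shows "sym_cond_prob P t d = (if P t d then 1 else 0)"
proof -
  have "card (sym_vecs t) \<noteq> 0"
    using finite_sym_vecs[OF assms(1)] id_in_sym_vecs[of t] by auto
  moreover have "{\<sigma>\<in>sym_vecs t. P (sym_tree \<sigma> t) (sym_disp \<sigma> t d)} = (if P t d then sym_vecs t else {})"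
    using invariant by auto
  ultimately show ?thesis
    unfolding sym_cond_prob_def by simp
qed

lemma sym_cond_prob_close_far_labels:
  assumes "plane_tree t"
  shows "sym_cond_prob
           (\<lambda>t d. \<exists>v\<in>t. \<exists>w\<in>t. real (tree_dist t v w) \<le> K \<and> \<bar>label t d v - label t d w\<bar> > M) t d
       = (if \<exists>v\<in>t. \<exists>w\<in>t. real (tree_dist t v w) \<le> K \<and> \<bar>label t d v - label t d w\<bar> > M then 1 else 0)"
proof (rule sym_cond_prob_invariant)
  show "finite t"
    using assms by (simp add: plane_tree_def)
next
  fix \<sigma> assume "\<sigma> \<in> sym_vecs t"
  then have inj_\<sigma>: "\<And>v. inj (\<sigma> v)"
    by (rule sym_vecs_inj)
  have dist: "tree_dist (sym_map \<sigma> ` t) (sym_map \<sigma> v) (sym_map \<sigma> w) = tree_dist t v w" for v w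
    using tree_dist_inj_image[OF inj_sym_map tree_adj_sym_map_iff] inj_\<sigma> by blast
  have label: "v \<in> t \<Longrightarrow> label (sym_map \<sigma> ` t) (sym_disp \<sigma> t d) (sym_map \<sigma> v) = label t d v" for v
    using label_sym_disp[OF inj_sym_map[OF inj_\<sigma>] assms] .
  show "(\<exists>v\<in>sym_tree \<sigma> t. \<exists>w\<in>sym_tree \<sigma> t. real (tree_dist (sym_tree \<sigma> t) v w) \<le> K
        \<and> \<bar>label (sym_tree \<sigma> t) (sym_disp \<sigma> t d) v - label (sym_tree \<sigma> t) (sym_disp \<sigma> t d) w\<bar> > M)
      \<longleftrightarrow> (\<exists>v\<in>t. \<exists>w\<in>t. real (tree_dist t v w) \<le> K \<and> \<bar>label t d v - label t d w\<bar> > M)"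
    unfolding sym_tree_def by (rule close_far_labels_image_iff) (simp_all only: dist label)
qed

lemma countable_plane_trees: "countable {t. plane_tree t}"
  by (rule countable_subset[OF _ countable_Collect_finite]) (auto simp: plane_tree_def)

lemma pred_plane_tree_valued:
  assumes "T \<in> \<Omega> \<rightarrow>\<^sub>M count_space {t. plane_tree t}"
    and "\<And>t. plane_tree t \<Longrightarrow> Measurable.pred \<Omega> (P t)"
  shows "Measurable.pred \<Omega> (\<lambda>\<omega>. P (T \<omega>) \<omega>)"
  using measurable_compose_countable'[where f=P, OF _ assms(1) countable_plane_trees] assms(2)
  by simp

lemma borel_measurable_label:
  assumes "\<And>v. (\<lambda>\<omega>. D \<omega> v) \<in> borel_measurable \<Omega>"
  shows "(\<lambda>\<omega>. label t (D \<omega>) v) \<in> borel_measurable \<Omega>"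
  unfolding label_def using assms by (intro borel_measurable_sum) auto

lemma pred_close_far_labels:
  assumes "finite t" and "\<And>v. (\<lambda>\<omega>. D \<omega> v) \<in> borel_measurable \<Omega>"
  shows "Measurable.pred \<Omega>
           (\<lambda>\<omega>. \<exists>v\<in>t. \<exists>w\<in>t. real (tree_dist t v w) \<le> K \<and> \<bar>label t (D \<omega>) v - label t (D \<omega>) w\<bar> > M)"
  using assms(1) borel_measurable_label[OF assms(2)] by (intro pred_intros_finite) measurable

theorem lemma3p2:
  fixes \<Omega> :: "'w measure"
    and T :: "'w \<Rightarrow> nat list set"
    and D :: "'w \<Rightarrow> nat list \<Rightarrow> real"
    and k K M :: real
  assumes "prob_space \<Omega>"
    and "T \<in> \<Omega> \<rightarrow>\<^sub>M count_space {t. plane_tree t}"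
    and "\<And>v. (\<lambda>\<omega>. D \<omega> v) \<in> borel_measurable \<Omega>"
  shows "measure \<Omega> {\<omega>\<in>space \<Omega>. \<exists>i\<in>{0..2 * card (T \<omega>) - 2}. \<exists>j\<in>{0..2 * card (T \<omega>) - 2}.
             \<bar>real i - real j\<bar> \<le> k \<and>
             \<bar>label (T \<omega>) (D \<omega>) (contour (T \<omega>) i) - label (T \<omega>) (D \<omega>) (contour (T \<omega>) j)\<bar> > M}
     \<le> measure \<Omega> {\<omega>\<in>space \<Omega>. \<exists>i\<in>{0..2 * card (T \<omega>) - 2}. \<exists>j\<in>{0..2 * card (T \<omega>) - 2}.
             \<bar>real i - real j\<bar> \<le> k \<and>
             real (tree_dist (T \<omega>) (contour (T \<omega>) i) (contour (T \<omega>) j)) > K}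
       + (\<integral>\<omega>. sym_cond_prob
              (\<lambda>t d. \<exists>v\<in>t. \<exists>w\<in>t. real (tree_dist t v w) \<le> K \<and> \<bar>label t d v - label t d w\<bar> > M)
              (T \<omega>) (D \<omega>) \<partial>\<Omega>)"
  (is "measure \<Omega> ?A \<le> measure \<Omega> ?B + (\<integral>\<omega>. sym_cond_prob ?Q (T \<omega>) (D \<omega>) \<partial>\<Omega>)")
proof -
  interpret prob_space \<Omega> by fact
  let ?far_contour = "\<lambda>t. \<exists>i\<in>{0..2 * card t - 2}. \<exists>j\<in>{0..2 * card t - 2}.
             \<bar>real i - real j\<bar> \<le> k \<and> real (tree_dist t (contour t i) (contour t j)) > K"
  let ?C = "{\<omega>\<in>space \<Omega>. ?Q (T \<omega>) (D \<omega>)}"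
  have tree: "plane_tree (T \<omega>)" if "\<omega> \<in> space \<Omega>" for \<omega>
    using measurable_space[OF assms(2) that] by simp
  have "Measurable.pred \<Omega> (\<lambda>\<omega>. ?far_contour (T \<omega>))"
    by (rule pred_plane_tree_valued[OF assms(2), of "\<lambda>t \<omega>. ?far_contour t"]) simp
  then have "?B \<in> sets \<Omega>"
    unfolding Measurable.pred_def .
  have "Measurable.pred \<Omega> (\<lambda>\<omega>. ?Q (T \<omega>) (D \<omega>))"
    by (rule pred_plane_tree_valued[OF assms(2), of "\<lambda>t \<omega>. ?Q t (D \<omega>)"])
      (rule pred_close_far_labels[OF _ assms(3)], simp add: plane_tree_def)
  then have "?C \<in> sets \<Omega>"
    unfolding Measurable.pred_def .
  have "?A \<subseteq> ?B \<union> ?C"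
    using contour_far_or_close_far_labels[OF tree] by blast
  with \<open>?B \<in> sets \<Omega>\<close> \<open>?C \<in> sets \<Omega>\<close> have "measure \<Omega> ?A \<le> measure \<Omega> ?B + measure \<Omega> ?C"
    by (meson finite_measure_mono measure_Un_le order_trans sets.Un)
  also have "measure \<Omega> ?C = (\<integral>\<omega>. indicator ?C \<omega> \<partial>\<Omega>)"
    using \<open>?C \<in> sets \<Omega>\<close> by (simp add: Int_absorb2 sets.sets_into_space)
  also have "\<dots> = (\<integral>\<omega>. sym_cond_prob ?Q (T \<omega>) (D \<omega>) \<partial>\<Omega>)"
    by (rule Bochner_Integration.integral_cong[OF refl])
      (simp add: sym_cond_prob_close_far_labels tree indicator_def)
  finally show ?thesis .
qed

end
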